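(* No rational prime $p\in\mathbb{Z}$ is a prime of $H_{1,2,2}$.
   Context: Let $\mathbf{i},\mathbf{j},\mathbf{k}$ be the standard quaternion units. $H_{1,2,2}$ is the subring of the quaternions equal to the $\mathbb{Z}$-module generated by $\mathbf{v}_1=1$, $\mathbf{v}_2=\mathbf{i}$, $\mathbf{v}_3=\tfrac12(1+\mathbf{i}+\sqrt2\,\mathbf{j})$, $\mathbf{v}_4=\tfrac12(1+\mathbf{i}+\sqrt2\,\mathbf{k})$. A unit is an element invertible in $H_{1,2,2}$. A prime of $H_{1,2,2}$ is a nonzero nonunit $\boldsymbol\pi$ such that whenever $\boldsymbol\pi=\mathbf{a}\mathbf{b}$ with $\mathbf{a},\mathbf{b}\in H_{1,2,2}$, at least one of $\mathbf{a},\mathbf{b}$ is a unit. *)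

theory Defs
  imports Complex_Main "HOL-Computational_Algebra.Primes"
begin

text \<open>Real quaternions a + b i + c j + d k, represented by their four real coordinates,
  with the Hamilton product (i^2 = j^2 = k^2 = ijk = -1).\<close>

datatype quat = Quat (qre: real) (qim_i: real) (qim_j: real) (qim_k: real)

definition qmult :: "quat \<Rightarrow> quat \<Rightarrow> quat" (infixl "\<star>" 70) where
  "qmult x y = Quat
     (qre x * qre y - qim_i x * qim_i y - qim_j x * qim_j y - qim_k x * qim_k y)
     (qre x * qim_i y + qim_i x * qre y + qim_j x * qim_k y - qim_k x * qim_j y)
     (qre x * qim_j y - qim_i x * qim_k y + qim_j x * qre y + qim_k x * qim_i y)
     (qre x * qim_k y + qim_i x * qim_j y - qim_j x * qim_i y + qim_k x * qre y)"

definition qadd :: "quat \<Rightarrow> quat \<Rightarrow> quat" where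
  "qadd x y = Quat (qre x + qre y) (qim_i x + qim_i y) (qim_j x + qim_j y) (qim_k x + qim_k y)"

definition qscale :: "int \<Rightarrow> quat \<Rightarrow> quat" where
  "qscale n x = Quat (of_int n * qre x) (of_int n * qim_i x) (of_int n * qim_j x) (of_int n * qim_k x)"

definition qzero :: quat where "qzero = Quat 0 0 0 0"
definition qone :: quat where "qone = Quat 1 0 0 0"

definition qint :: "int \<Rightarrow> quat" where "qint n = Quat (of_int n) 0 0 0"

definition v1 :: quat where "v1 = Quat 1 0 0 0"
definition v2 :: quat where "v2 = Quat 0 1 0 0"
definition v3 :: quat where "v3 = Quat (1/2) (1/2) (sqrt 2 / 2) 0"
definition v4 :: quat where "v4 = Quat (1/2) (1/2) 0 (sqrt 2 / 2)"

definition H122 :: "quat set" where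
  "H122 = {qadd (qadd (qscale a v1) (qscale b v2)) (qadd (qscale c v3) (qscale d v4)) | a b c d. True}"

definition H_unit :: "quat \<Rightarrow> bool" where
  "H_unit x \<longleftrightarrow> x \<in> H122 \<and> (\<exists>y\<in>H122. x \<star> y = qone \<and> y \<star> x = qone)"

definition H_prime :: "quat \<Rightarrow> bool" where
  "H_prime p \<longleftrightarrow> p \<in> H122 \<and> p \<noteq> qzero \<and> \<not> H_unit p \<and>
     (\<forall>a\<in>H122. \<forall>b\<in>H122. p = a \<star> b \<longrightarrow> H_unit a \<or> H_unit b)"

end

theory Submission
  imports Defs "HOL-Number_Theory.Cong" "HOL-Library.Centered_Division"
begin

text \<open>
  By Lagrange's four-square theorem p = A^2 + B^2 + u^2 + v^2, and then
  x = A + B i + (u + v)/\<surd>2 j + (u - v)/\<surd>2 k lies in H_{1,2,2} and has norm p.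
  Hence p = x x* factors into two elements of norm p > 1, neither of which is a unit,
  because units of H_{1,2,2} have norm 1 (norms of its elements are non-negative integers).
  The four-square theorem for primes is proved by Euler's descent: starting from a multiple
  m p < p^2 that is a sum of four squares, reducing the four roots modulo m and applying
  Euler's four-square identity produces a smaller such multiple r p.
\<close>

definition sum_of_four_squares :: "int \<Rightarrow> bool" where
  "sum_of_four_squares n \<longleftrightarrow> (\<exists>a b c d. n = a\<^sup>2 + b\<^sup>2 + c\<^sup>2 + d\<^sup>2)"

lemma euler_four_square_identity:
  fixes x1 x2 x3 x4 y1 y2 y3 y4 :: "'a :: comm_ring_1"
  shows "(x1\<^sup>2 + x2\<^sup>2 + x3\<^sup>2 + x4\<^sup>2) * (y1\<^sup>2 + y2\<^sup>2 + y3\<^sup>2 + y4\<^sup>2) =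
    (x1*y1 + x2*y2 + x3*y3 + x4*y4)\<^sup>2 + (x1*y2 - x2*y1 + x3*y4 - x4*y3)\<^sup>2
    + (x1*y3 - x3*y1 + x4*y2 - x2*y4)\<^sup>2 + (x1*y4 - x4*y1 + x2*y3 - x3*y2)\<^sup>2"
  by (simp add: power2_eq_square algebra_simps)

lemma centered_cmod_bounds:
  fixes m x :: int
  assumes "0 < m"
  shows "- m \<le> 2 * (x cmod m)" and "2 * (x cmod m) < m"
proof -
  have "- (m div 2) \<le> x cmod m" "x cmod m < m - m div 2"
    using divisor_less_equal_cmod[of m x] cmod_less_divisor[of m x] assms by simp_all
  moreover have "m - 1 \<le> 2 * (m div 2)" "2 * (m div 2) \<le> m"
    by linarith+
  ultimately show "- m \<le> 2 * (x cmod m)" "2 * (x cmod m) < m"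
    by linarith+
qed

lemma centered_square_bound:
  fixes m y :: int
  assumes "- m \<le> 2 * y" "2 * y < m"
  shows "(2 * y)\<^sup>2 \<le> m\<^sup>2" and "(2 * y)\<^sup>2 = m\<^sup>2 \<Longrightarrow> 2 * y = - m"
proof -
  have "\<bar>2 * y\<bar> \<le> m"
    using assms by arith
  then show "(2 * y)\<^sup>2 \<le> m\<^sup>2"
    using power2_le_iff_abs_le[of m "2 * y"] assms by simp
  assume "(2 * y)\<^sup>2 = m\<^sup>2"
  then have "2 * y = m \<or> 2 * y = - m"
    by (simp only: power2_eq_iff)
  then show "2 * y = - m"
    using assms by linarith
qed

lemma sum_of_four_squares_quotient:
  fixes m p r :: int
  assumes "m \<noteq> 0"
    and x: "m * p = x1\<^sup>2 + x2\<^sup>2 + x3\<^sup>2 + x4\<^sup>2" and y: "m * r = y1\<^sup>2 + y2\<^sup>2 + y3\<^sup>2 + y4\<^sup>2"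
    and xy: "[x1 = y1] (mod m)" "[x2 = y2] (mod m)" "[x3 = y3] (mod m)" "[x4 = y4] (mod m)"
  shows "sum_of_four_squares (r * p)"
proof -
  have "[x1*y1 + x2*y2 + x3*y3 + x4*y4 = m * r] (mod m)"
    using xy unfolding y power2_eq_square by (intro cong_add cong_mult) auto
  then have "[x1*y1 + x2*y2 + x3*y3 + x4*y4 = 0] (mod m)"
    by (simp add: cong_def)
  moreover have "[x1*y2 - x2*y1 + x3*y4 - x4*y3 = y1*y2 - y2*y1 + y3*y4 - y4*y3] (mod m)"
    "[x1*y3 - x3*y1 + x4*y2 - x2*y4 = y1*y3 - y3*y1 + y4*y2 - y2*y4] (mod m)"
    "[x1*y4 - x4*y1 + x2*y3 - x3*y2 = y1*y4 - y4*y1 + y2*y3 - y3*y2] (mod m)"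
    using xy by (intro cong_add cong_diff cong_mult; simp)+
  ultimately have "m dvd x1*y1 + x2*y2 + x3*y3 + x4*y4" "m dvd x1*y2 - x2*y1 + x3*y4 - x4*y3"
    "m dvd x1*y3 - x3*y1 + x4*y2 - x2*y4" "m dvd x1*y4 - x4*y1 + x2*y3 - x3*y2"
    by (simp_all add: mult.commute flip: cong_0_iff)
  then obtain w1 w2 w3 w4 where w: "x1*y1 + x2*y2 + x3*y3 + x4*y4 = m * w1"
    "x1*y2 - x2*y1 + x3*y4 - x4*y3 = m * w2" "x1*y3 - x3*y1 + x4*y2 - x2*y4 = m * w3"
    "x1*y4 - x4*y1 + x2*y3 - x3*y2 = m * w4"
    by (elim dvdE)
  have "m\<^sup>2 * (r * p) = (m * p) * (m * r)"
    by (simp add: power2_eq_square ac_simps)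
  also have "\<dots> = (m * w1)\<^sup>2 + (m * w2)\<^sup>2 + (m * w3)\<^sup>2 + (m * w4)\<^sup>2"
    unfolding x y euler_four_square_identity w ..
  also have "\<dots> = m\<^sup>2 * (w1\<^sup>2 + w2\<^sup>2 + w3\<^sup>2 + w4\<^sup>2)"
    by (simp add: power_mult_distrib algebra_simps)
  finally show ?thesis
    using \<open>m \<noteq> 0\<close> unfolding sum_of_four_squares_def by auto
qed

lemma sum_four_centered_squares_bound:
  fixes m :: int
  assumes centered: "\<forall>y\<in>{y1, y2, y3, y4}. - m \<le> 2 * y \<and> 2 * y < m"
  shows "(2*y1)\<^sup>2 + (2*y2)\<^sup>2 + (2*y3)\<^sup>2 + (2*y4)\<^sup>2 \<le> 4 * m\<^sup>2"
    and "(2*y1)\<^sup>2 + (2*y2)\<^sup>2 + (2*y3)\<^sup>2 + (2*y4)\<^sup>2 = 4 * m\<^sup>2 \<Longrightarrow>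
      2*y1 = - m \<and> 2*y2 = - m \<and> 2*y3 = - m \<and> 2*y4 = - m"
proof -
  have sq: "(2 * y)\<^sup>2 \<le> m\<^sup>2" "(2 * y)\<^sup>2 = m\<^sup>2 \<Longrightarrow> 2 * y = - m" if "y \<in> {y1, y2, y3, y4}" for y
    using centered that centered_square_bound by blast+
  show "(2*y1)\<^sup>2 + (2*y2)\<^sup>2 + (2*y3)\<^sup>2 + (2*y4)\<^sup>2 \<le> 4 * m\<^sup>2"
    using sq[of y1] sq[of y2] sq[of y3] sq[of y4] by simp
  assume "(2*y1)\<^sup>2 + (2*y2)\<^sup>2 + (2*y3)\<^sup>2 + (2*y4)\<^sup>2 = 4 * m\<^sup>2"
  then show "2*y1 = - m \<and> 2*y2 = - m \<and> 2*y3 = - m \<and> 2*y4 = - m"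
    using sq[of y1] sq[of y2] sq[of y3] sq[of y4] by auto
qed

lemma four_squares_odd_half_multiples_dvd:
  fixes m p :: int
  assumes "m \<noteq> 0" and x: "m * p = x1\<^sup>2 + x2\<^sup>2 + x3\<^sup>2 + x4\<^sup>2"
    and "2*x1 = m * (2*q1 - 1)" "2*x2 = m * (2*q2 - 1)" "2*x3 = m * (2*q3 - 1)" "2*x4 = m * (2*q4 - 1)"
  shows "m dvd p"
proof -
  have "4 * (m * p) = (2*x1)\<^sup>2 + (2*x2)\<^sup>2 + (2*x3)\<^sup>2 + (2*x4)\<^sup>2"
    using x by (simp add: power_mult_distrib)
  also have "\<dots> = (m * (2*q1 - 1))\<^sup>2 + (m * (2*q2 - 1))\<^sup>2 + (m * (2*q3 - 1))\<^sup>2 + (m * (2*q4 - 1))\<^sup>2"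
    using assms(3-) by simp
  also have "\<dots> = 4 * (m * (m * (q1\<^sup>2 - q1 + q2\<^sup>2 - q2 + q3\<^sup>2 - q3 + q4\<^sup>2 - q4 + 1)))"
    by (simp add: power2_eq_square algebra_simps)
  finally show "m dvd p"
    using \<open>m \<noteq> 0\<close> by simp
qed

lemma four_squares_remainder_bounds:
  fixes m p r :: int
  assumes "0 < m" and "\<not> m dvd p"
    and x: "m * p = x1\<^sup>2 + x2\<^sup>2 + x3\<^sup>2 + x4\<^sup>2"
    and xy: "x1 = y1 + m * q1" "x2 = y2 + m * q2" "x3 = y3 + m * q3" "x4 = y4 + m * q4"
    and centered: "\<forall>y\<in>{y1, y2, y3, y4}. - m \<le> 2 * y \<and> 2 * y < m"
    and y: "m * r = y1\<^sup>2 + y2\<^sup>2 + y3\<^sup>2 + y4\<^sup>2"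
  shows "0 < r" and "r < m"
proof -
  have four_y: "(2*y1)\<^sup>2 + (2*y2)\<^sup>2 + (2*y3)\<^sup>2 + (2*y4)\<^sup>2 = 4 * (m * r)"
    unfolding y by (simp add: power_mult_distrib)
  then have "r \<le> m"
    using sum_four_centered_squares_bound(1)[OF centered] \<open>0 < m\<close> by (simp add: power2_eq_square)
  have "0 \<le> m * r"
    unfolding y by simp
  then have "0 \<le> r"
    using \<open>0 < m\<close> by (simp add: zero_le_mult_iff)
  moreover have "r \<noteq> 0"
  proof
    assume "r = 0"
    then have "y1\<^sup>2 + y2\<^sup>2 + y3\<^sup>2 + y4\<^sup>2 = 0"
      using y by simp
    then have "y1\<^sup>2 = 0" "y2\<^sup>2 = 0" "y3\<^sup>2 = 0" "y4\<^sup>2 = 0"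
      using zero_le_power2[of y1] zero_le_power2[of y2] zero_le_power2[of y3] zero_le_power2[of y4]
      by linarith+
    then have "y1 = 0 \<and> y2 = 0 \<and> y3 = 0 \<and> y4 = 0"
      by simp
    then have "m * p = m * (m * (q1\<^sup>2 + q2\<^sup>2 + q3\<^sup>2 + q4\<^sup>2))"
      using x xy by (simp add: power2_eq_square algebra_simps)
    then show False
      using \<open>0 < m\<close> \<open>\<not> m dvd p\<close> by simp
  qed
  moreover have "r \<noteq> m"
  proof
    assume "r = m"
    then have "2*y1 = - m" "2*y2 = - m" "2*y3 = - m" "2*y4 = - m"
      using sum_four_centered_squares_bound(2)[OF centered] four_y by (simp_all add: power2_eq_square)
    then have half: "2*x1 = m * (2*q1 - 1)" "2*x2 = m * (2*q2 - 1)" "2*x3 = m * (2*q3 - 1)"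
        "2*x4 = m * (2*q4 - 1)"
      using xy by (simp_all add: algebra_simps)
    have "m dvd p"
      by (rule four_squares_odd_half_multiples_dvd[OF _ x half]) (use \<open>0 < m\<close> in simp)
    with \<open>\<not> m dvd p\<close> show False ..
  qed
  ultimately show "0 < r" "r < m"
    using \<open>r \<le> m\<close> by auto
qed

lemma four_squares_descent:
  fixes p m :: int
  assumes p: "prime p" and m: "1 < m" "m < p" and "sum_of_four_squares (m * p)"
  obtains r where "0 < r" "r < m" "sum_of_four_squares (r * p)"
proof -
  obtain x1 x2 x3 x4 where x: "m * p = x1\<^sup>2 + x2\<^sup>2 + x3\<^sup>2 + x4\<^sup>2"
    using assms(4) unfolding sum_of_four_squares_def by blast
  have cmod_cdiv: "x = x cmod m + m * (x cdiv m)" for x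
    by (simp add: cmod_mult_cdiv_eq)
  have cong_cmod: "[x = x cmod m] (mod m)" for x
    by (subst cmod_cdiv) (simp add: cong_def)
  have "[x1\<^sup>2 + x2\<^sup>2 + x3\<^sup>2 + x4\<^sup>2 = (x1 cmod m)\<^sup>2 + (x2 cmod m)\<^sup>2 + (x3 cmod m)\<^sup>2 + (x4 cmod m)\<^sup>2] (mod m)"
    by (intro cong_add cong_pow cong_cmod)
  then have "m dvd (x1 cmod m)\<^sup>2 + (x2 cmod m)\<^sup>2 + (x3 cmod m)\<^sup>2 + (x4 cmod m)\<^sup>2"
    using x by (metis cong_dvd_iff dvd_triv_left)
  then obtain r where r: "(x1 cmod m)\<^sup>2 + (x2 cmod m)\<^sup>2 + (x3 cmod m)\<^sup>2 + (x4 cmod m)\<^sup>2 = m * r"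
    by (elim dvdE)
  have "\<not> m dvd p"
    using prime_int_not_dvd[OF p] m by blast
  moreover have "\<forall>y\<in>{x1 cmod m, x2 cmod m, x3 cmod m, x4 cmod m}. - m \<le> 2 * y \<and> 2 * y < m"
    using centered_cmod_bounds m by auto
  ultimately have "0 < r" "r < m"
    using m four_squares_remainder_bounds[OF _ _ x cmod_cdiv cmod_cdiv cmod_cdiv cmod_cdiv _ r[symmetric]] by auto
  moreover have "sum_of_four_squares (r * p)"
    using m by (intro sum_of_four_squares_quotient[OF _ x r[symmetric] cong_cmod cong_cmod cong_cmod cong_cmod]) auto
  ultimately show thesis
    using that by blast
qed

lemma sum_of_four_squares_of_multiple:
  fixes p m :: int
  assumes "prime p" "0 < m" "m < p" "sum_of_four_squares (m * p)"
  shows "sum_of_four_squares p"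
  using assms(2-)
proof (induction "nat m" arbitrary: m rule: less_induct)
  case less
  show ?case
  proof (cases "m = 1")
    case True
    with less.prems show ?thesis by simp
  next
    case False
    with less.prems have "1 < m"
      by simp
    then obtain r where "0 < r" "r < m" "sum_of_four_squares (r * p)"
      using four_squares_descent[OF assms(1) _ less.prems(2,3)] by blast
    with less.hyps[of r] less.prems show ?thesis by simp
  qed
qed

lemma inj_on_square_mod_prime:
  fixes p h :: int
  assumes p: "prime p" and "2 * h < p"
  shows "inj_on (\<lambda>x. x\<^sup>2 mod p) {0..h}"
proof (rule inj_onI)
  fix x y
  assume x: "x \<in> {0..h}" and y: "y \<in> {0..h}" and "x\<^sup>2 mod p = y\<^sup>2 mod p"
  then have "p dvd (x - y) * (x + y)"
    by (simp add: mod_eq_dvd_iff power2_eq_square algebra_simps)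
  then have "p dvd x - y \<or> p dvd x + y"
    using p by (simp add: prime_dvd_mult_iff)
  moreover have small: "a = 0" if "p dvd a" "\<bar>a\<bar> < p" for a
    using that dvd_imp_le_int[of a p] by force
  moreover have "\<bar>x - y\<bar> < p" "\<bar>x + y\<bar> < p"
    using x y \<open>2 * h < p\<close> by auto
  ultimately have "x - y = 0 \<or> x + y = 0"
    using small by blast
  then show "x = y"
    using x y by auto
qed

lemma inj_on_images_meet:
  assumes "inj_on f A" "inj_on g A" "f ` A \<subseteq> B" "g ` A \<subseteq> B" "finite B" "card B < 2 * card A"
  obtains x y where "x \<in> A" "y \<in> A" "f x = g y"
proof -
  have "finite A"
    using assms(6) card.infinite by fastforce
  have "f ` A \<inter> g ` A \<noteq> {}"
  proof
    assume "f ` A \<inter> g ` A = {}"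
    then have "card (f ` A \<union> g ` A) = 2 * card A"
      using \<open>finite A\<close> assms(1,2) by (simp add: card_Un_disjoint card_image)
    moreover have "card (f ` A \<union> g ` A) \<le> card B"
      using assms(3-5) by (intro card_mono) auto
    ultimately show False
      using assms(6) by simp
  qed
  then show thesis
    using that by blast
qed

lemma prime_dvd_sum_two_squares_plus_one:
  fixes p :: int
  assumes p: "prime p" and "odd p"
  obtains x y where "0 \<le> x" "2 * x < p" "0 \<le> y" "2 * y < p" "p dvd x\<^sup>2 + y\<^sup>2 + 1"
proof -
  define h where "h = (p - 1) div 2"
  have p_eq: "p = 2 * h + 1"
    using \<open>odd p\<close> unfolding h_def by (simp add: odd_two_times_div_two_succ)
  have "0 \<le> h"
    using p_eq prime_gt_1_int[OF p] by simp
  have inj: "inj_on (\<lambda>x. x\<^sup>2 mod p) {0..h}"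
    using inj_on_square_mod_prime[OF p] p_eq by simp
  have inj': "inj_on (\<lambda>y. (- 1 - y\<^sup>2) mod p) {0..h}"
  proof (rule inj_onI)
    fix x y
    assume "x \<in> {0..h}" "y \<in> {0..h}" "(- 1 - x\<^sup>2) mod p = (- 1 - y\<^sup>2) mod p"
    moreover from this(3) have "p dvd - (x\<^sup>2 - y\<^sup>2)"
      unfolding mod_eq_dvd_iff by (simp add: algebra_simps)
    then have "x\<^sup>2 mod p = y\<^sup>2 mod p"
      by (simp only: dvd_minus_iff mod_eq_dvd_iff)
    ultimately show "x = y"
      using inj by (auto dest: inj_onD)
  qed
  have "(\<lambda>x. x\<^sup>2 mod p) ` {0..h} \<subseteq> {0..<p}" "(\<lambda>y. (- 1 - y\<^sup>2) mod p) ` {0..h} \<subseteq> {0..<p}"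
    using prime_gt_1_int[OF p] by auto
  moreover have "card {0..<p} < 2 * card {0..h}"
    using p_eq \<open>0 \<le> h\<close> by simp
  ultimately obtain x y where "x \<in> {0..h}" "y \<in> {0..h}" "x\<^sup>2 mod p = (- 1 - y\<^sup>2) mod p"
    using inj_on_images_meet[OF inj inj'] by blast
  moreover have "x\<^sup>2 - (- 1 - y\<^sup>2) = x\<^sup>2 + y\<^sup>2 + 1"
    by simp
  ultimately have "p dvd x\<^sup>2 + y\<^sup>2 + 1"
    by (metis mod_eq_dvd_iff)
  with \<open>x \<in> {0..h}\<close> \<open>y \<in> {0..h}\<close> show thesis
    using p_eq by (intro that[of x y]) auto
qed

lemma prime_multiple_sum_of_four_squares:
  fixes p :: int
  assumes p: "prime p" and "odd p"
  obtains m where "0 < m" "m < p" "sum_of_four_squares (m * p)"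
proof -
  obtain x y where xy: "0 \<le> x" "2 * x < p" "0 \<le> y" "2 * y < p" "p dvd x\<^sup>2 + y\<^sup>2 + 1"
    using prime_dvd_sum_two_squares_plus_one[OF assms] .
  then obtain m where m: "m * p = x\<^sup>2 + y\<^sup>2 + 1"
    by (metis dvd_def mult.commute)
  have "p > 1"
    using prime_gt_1_int[OF p] .
  have "(2 * x)\<^sup>2 \<le> (p - 1)\<^sup>2" "(2 * y)\<^sup>2 \<le> (p - 1)\<^sup>2"
    using xy by (intro power_mono; linarith)+
  moreover have "4 * (m * p) = (2 * x)\<^sup>2 + (2 * y)\<^sup>2 + 4"
    unfolding m by (simp add: power_mult_distrib)
  moreover have "(p - 1)\<^sup>2 = p * p - 2 * p + 1"
    by (simp add: power2_eq_square algebra_simps)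
  ultimately have "m * p < p * p"
    using \<open>p > 1\<close> zero_le_square[of p] by linarith
  then have "m < p"
    using \<open>p > 1\<close> by simp
  moreover have "0 < m"
  proof -
    have "0 < m * p"
      unfolding m by (simp add: add_nonneg_pos)
    then show "0 < m"
      using \<open>p > 1\<close> by (simp add: zero_less_mult_iff)
  qed
  moreover have "sum_of_four_squares (m * p)"
    unfolding sum_of_four_squares_def m by (rule exI[of _ x], rule exI[of _ y], rule exI[of _ 1]) simp
  ultimately show thesis
    using that by blast
qed

theorem prime_sum_of_four_squares:
  fixes p :: int
  assumes "prime p"
  shows "sum_of_four_squares p"
proof (cases "p = 2")
  case True
  then show ?thesis
    unfolding sum_of_four_squares_def by (intro exI[of _ 1] exI[of _ 1] exI[of _ 0]) simp
next
  case False
  then have "p > 2"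
    using prime_gt_1_int[OF assms] by simp
  then have "odd p"
    using prime_odd_int[OF assms] by blast
  then obtain m where "0 < m" "m < p" "sum_of_four_squares (m * p)"
    using prime_multiple_sum_of_four_squares[OF assms] by blast
  then show ?thesis
    using sum_of_four_squares_of_multiple[OF assms] by blast
qed

definition qnorm :: "quat \<Rightarrow> real" where
  "qnorm x = (qre x)\<^sup>2 + (qim_i x)\<^sup>2 + (qim_j x)\<^sup>2 + (qim_k x)\<^sup>2"

definition qconj :: "quat \<Rightarrow> quat" where
  "qconj x = Quat (qre x) (- qim_i x) (- qim_j x) (- qim_k x)"

lemma qnorm_nonneg: "0 \<le> qnorm x"
  by (simp add: qnorm_def)

lemma qnorm_qconj [simp]: "qnorm (qconj x) = qnorm x"
  by (simp add: qnorm_def qconj_def)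

lemma qnorm_qmult: "qnorm (x \<star> y) = qnorm x * qnorm y"
  unfolding qnorm_def qmult_def by simp algebra

lemma qmult_qconj: "x \<star> qconj x = Quat (qnorm x) 0 0 0"
  by (simp add: qmult_def qconj_def qnorm_def power2_eq_square algebra_simps)

lemma H122_iff:
  "x \<in> H122 \<longleftrightarrow> (\<exists>a b c d :: int. x =
     Quat (of_int a + of_int (c + d) / 2) (of_int b + of_int (c + d) / 2)
       (of_int c * sqrt 2 / 2) (of_int d * sqrt 2 / 2))"
proof -
  have "qadd (qadd (qscale a v1) (qscale b v2)) (qadd (qscale c v3) (qscale d v4)) =
      Quat (of_int a + of_int (c + d) / 2) (of_int b + of_int (c + d) / 2)
        (of_int c * sqrt 2 / 2) (of_int d * sqrt 2 / 2)" for a b c d :: int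
    by (simp add: qadd_def qscale_def v1_def v2_def v3_def v4_def field_simps)
  then show ?thesis
    unfolding H122_def by auto
qed

lemma qconj_in_H122:
  assumes "x \<in> H122"
  shows "qconj x \<in> H122"
proof -
  from assms obtain a b c d :: int
    where x: "x = Quat (of_int a + of_int (c + d) / 2) (of_int b + of_int (c + d) / 2)
      (of_int c * sqrt 2 / 2) (of_int d * sqrt 2 / 2)"
    unfolding H122_iff by blast
  show ?thesis
    unfolding H122_iff qconj_def x
    by (rule exI[of _ "a + c + d"], rule exI[of _ "- b"], rule exI[of _ "- c"], rule exI[of _ "- d"])
      (simp add: field_simps)
qed

lemma qnorm_H122_Ints: "x \<in> H122 \<Longrightarrow> qnorm x \<in> \<int>"
proof -
  assume "x \<in> H122"
  then obtain a b c d :: int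
    where "x = Quat (of_int a + of_int (c + d) / 2) (of_int b + of_int (c + d) / 2)
      (of_int c * sqrt 2 / 2) (of_int d * sqrt 2 / 2)"
    unfolding H122_iff by blast
  then have "qnorm x = of_int (a\<^sup>2 + b\<^sup>2 + (a + b) * (c + d) + c\<^sup>2 + d\<^sup>2 + c * d)"
    by (simp add: qnorm_def power2_eq_square field_simps)
  then show ?thesis
    by simp
qed

lemma qnorm_H_unit: "H_unit x \<Longrightarrow> qnorm x = 1"
proof -
  assume "H_unit x"
  then obtain y where "x \<in> H122" "y \<in> H122" "x \<star> y = qone"
    unfolding H_unit_def by blast
  then obtain a b :: int where ab: "qnorm x = of_int a" "qnorm y = of_int b"
    using qnorm_H122_Ints by (metis Ints_cases)
  have "qnorm x * qnorm y = 1"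
    using \<open>x \<star> y = qone\<close> qnorm_qmult[of x y] by (simp add: qone_def qnorm_def)
  then have "a * b = 1"
    unfolding ab by (metis of_int_eq_1_iff of_int_mult)
  moreover have "0 \<le> a"
    using qnorm_nonneg[of x] ab by simp
  ultimately show "qnorm x = 1"
    using ab by (simp add: zmult_eq_1_iff)
qed

lemma sum_of_four_squares_qnorm_H122:
  assumes "sum_of_four_squares n"
  shows "\<exists>x\<in>H122. qnorm x = of_int n"
proof -
  obtain A B u v where n: "n = A\<^sup>2 + B\<^sup>2 + u\<^sup>2 + v\<^sup>2"
    using assms unfolding sum_of_four_squares_def by blast
  define x where "x = Quat A B ((u + v) * sqrt 2 / 2) ((u - v) * sqrt 2 / 2)"
  have "x \<in> H122"
    unfolding H122_iff x_def
    by (rule exI[of _ "A - u"], rule exI[of _ "B - u"], rule exI[of _ "u + v"], rule exI[of _ "u - v"]) simp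
  moreover have "qnorm x = of_int n"
    unfolding x_def qnorm_def n by (simp add: power2_eq_square field_simps)
  ultimately show ?thesis
    by blast
qed

theorem theorem36:
  fixes p :: int
  assumes "prime p"
  shows "\<not> H_prime (qint p)"
proof
  assume "H_prime (qint p)"
  obtain x where x: "x \<in> H122" "qnorm x = of_int p"
    using sum_of_four_squares_qnorm_H122 prime_sum_of_four_squares[OF assms] by blast
  have "qint p = x \<star> qconj x"
    using x(2) by (simp add: qmult_qconj qint_def)
  moreover have "qconj x \<in> H122"
    using x(1) by (rule qconj_in_H122)
  moreover have "\<not> H_unit x" "\<not> H_unit (qconj x)"
    using x(2) prime_gt_1_int[OF assms] qnorm_H_unit by fastforce+
  ultimately show False
    using \<open>H_prime (qint p)\<close> x(1) unfolding H_prime_def by blast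
qed

end
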